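(* Let $M$ be a root-closed Puiseux monoid with $M\neq\{0\}$. Then: (1) $M$ is atomic if and only if $M$ is cyclic; (2) $M$ is antimatter if and only if $0$ is a limit point of $M$ (in the usual topology of $\mathbb{R}$); (3) $M$ is either atomic or antimatter.
   Context: A Puiseux monoid is an additive submonoid of $(\mathbb{Q}_{\ge 0},+)$. Its difference group is $\mathsf{gp}(M)=\{x-y\mid x,y\in M\}$. An element $x\in\mathsf{gp}(M)$ is a root element of $M$ if $nx\in M$ for some $n\in\mathbb{N}$; $M$ is root-closed if every root element of $M$ lies in $M$. An atom of $M$ is a nonzero element $a$ such that $a=x+y$ with $x,y\in M$ implies $x=0$ or $y=0$. $M$ is atomic if every element is a finite sum of atoms, antimatter if it has no atoms, and cyclic if it is generated by a single element. *)

theory Defs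
  imports "HOL-Analysis.Analysis"
begin

definition puiseux_monoid :: "rat set \<Rightarrow> bool" where
  "puiseux_monoid M \<longleftrightarrow> 0 \<in> M \<and> (\<forall>x\<in>M. \<forall>y\<in>M. x + y \<in> M) \<and> (\<forall>x\<in>M. 0 \<le> x)"

definition diff_group :: "rat set \<Rightarrow> rat set" where
  "diff_group M = {x - y | x y. x \<in> M \<and> y \<in> M}"

definition root_element :: "rat set \<Rightarrow> rat \<Rightarrow> bool" where
  "root_element M x \<longleftrightarrow> x \<in> diff_group M \<and> (\<exists>n::nat. n \<ge> 1 \<and> of_nat n * x \<in> M)"

definition root_closed :: "rat set \<Rightarrow> bool" where
  "root_closed M \<longleftrightarrow> (\<forall>x. root_element M x \<longrightarrow> x \<in> M)"

definition atom :: "rat set \<Rightarrow> rat \<Rightarrow> bool" where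
  "atom M a \<longleftrightarrow> a \<in> M \<and> a \<noteq> 0 \<and>
     (\<forall>x\<in>M. \<forall>y\<in>M. a = x + y \<longrightarrow> x = 0 \<or> y = 0)"

definition atomic :: "rat set \<Rightarrow> bool" where
  "atomic M \<longleftrightarrow> (\<forall>x\<in>M. \<exists>as. (\<forall>a\<in>set as. atom M a) \<and> sum_list as = x)"

definition antimatter :: "rat set \<Rightarrow> bool" where
  "antimatter M \<longleftrightarrow> (\<nexists>a. atom M a)"

definition cyclic :: "rat set \<Rightarrow> bool" where
  "cyclic M \<longleftrightarrow> (\<exists>g. M = {of_nat n * g | n::nat. True})"

end

theory Submission
  imports Defs
begin

text \<open>
  In a root-closed Puiseux monoid the difference of two elements \<open>y \<le> x\<close> is again an element:
  \<open>x - y\<close> lies in the difference group and a suitable integer multiple of it is a multiple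
  of \<open>y\<close>. Hence if \<open>M\<close> has a least positive element \<open>g\<close>, division with remainder shows
  \<open>M = \<nat> g\<close>, so \<open>M\<close> is cyclic, atomic, and bounded away from \<open>0\<close>. Otherwise every positive
  \<open>x\<close> exceeds some positive \<open>y\<close>, and one of \<open>y\<close>, \<open>x - y\<close> is at most \<open>x / 2\<close>; so
  \<open>M\<close> has arbitrarily small positive elements, and no atom \<open>a\<close> survives, since
  \<open>a = y + (a - y)\<close> for any positive \<open>y < a\<close>.
\<close>

definition least_positive :: "rat set \<Rightarrow> rat \<Rightarrow> bool" where
  "least_positive M g \<longleftrightarrow> g \<in> M \<and> 0 < g \<and> (\<forall>x\<in>M. 0 < x \<longrightarrow> g \<le> x)"

lemma puiseux_monoid_nonneg: "puiseux_monoid M \<Longrightarrow> x \<in> M \<Longrightarrow> 0 \<le> x"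
  by (simp add: puiseux_monoid_def)

lemma puiseux_monoid_pos_iff: "puiseux_monoid M \<Longrightarrow> x \<in> M \<Longrightarrow> 0 < x \<longleftrightarrow> x \<noteq> 0"
  using puiseux_monoid_nonneg by force

lemma puiseux_monoid_of_nat_mult:
  assumes "puiseux_monoid M" "y \<in> M"
  shows "of_nat n * y \<in> M"
  using assms by (induction n) (auto simp: puiseux_monoid_def algebra_simps)

lemma root_closed_diff_mem:
  assumes pm: "puiseux_monoid M" and rc: "root_closed M"
    and x: "x \<in> M" and y: "y \<in> M" and le: "y \<le> x"
  shows "x - y \<in> M"
proof (cases "y = 0")
  case True
  then show ?thesis using x by simp
next
  case False
  with pm y have "0 < y" by (simp add: puiseux_monoid_pos_iff)
  obtain r s where y_frac: "y = of_int r / of_int s" and "0 < s"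
    by (metis quotient_of_denom_pos quotient_of_div surj_pair)
  with \<open>0 < y\<close> have "0 < r" by (simp add: zero_less_divide_iff)
  obtain u v where d_frac: "x - y = of_int u / of_int v" and "0 < v"
    by (metis quotient_of_denom_pos quotient_of_div surj_pair)
  moreover from le d_frac have "0 \<le> (of_int u / of_int v :: rat)" by simp
  ultimately have "0 \<le> u" by (simp add: zero_le_divide_iff)
  have "of_nat (nat (u * s)) * y = of_nat (nat (v * r)) * (x - y)"
    using \<open>0 \<le> u\<close> \<open>0 < s\<close> \<open>0 < v\<close> \<open>0 < r\<close> y_frac d_frac by (simp add: field_simps)
  moreover have "of_nat (nat (u * s)) * y \<in> M" by (rule puiseux_monoid_of_nat_mult[OF pm y])
  ultimately have "of_nat (nat (v * r)) * (x - y) \<in> M" by simp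
  moreover have "nat (v * r) \<ge> 1" using \<open>0 < v\<close> \<open>0 < r\<close> by (simp add: Suc_le_eq)
  moreover have "x - y \<in> diff_group M" using x y by (auto simp: diff_group_def)
  ultimately have "root_element M (x - y)" unfolding root_element_def by blast
  with rc show ?thesis unfolding root_closed_def by blast
qed

lemma islimpt_zero_iff_small_elements:
  assumes "puiseux_monoid M"
  shows "(0::real) islimpt (real_of_rat ` M) \<longleftrightarrow> (\<forall>\<epsilon>>0. \<exists>x\<in>M. 0 < x \<and> x < \<epsilon>)"
proof
  assume lim: "(0::real) islimpt (real_of_rat ` M)"
  show "\<forall>\<epsilon>>0. \<exists>x\<in>M. 0 < x \<and> x < \<epsilon>"
  proof (intro allI impI)
    fix \<epsilon> :: rat assume "0 < \<epsilon>"
    then obtain y where "y \<in> real_of_rat ` M" "y \<noteq> 0" "dist y 0 < of_rat \<epsilon>"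
      using lim unfolding islimpt_approachable by (meson zero_less_of_rat_iff)
    then obtain x where "x \<in> M" "x \<noteq> 0" "\<bar>of_rat x\<bar> < (of_rat \<epsilon> :: real)"
      by (auto simp: dist_real_def)
    with assms have "0 < x" "x < \<epsilon>" by (auto simp: puiseux_monoid_pos_iff of_rat_less)
    with \<open>x \<in> M\<close> show "\<exists>x\<in>M. 0 < x \<and> x < \<epsilon>" by blast
  qed
next
  assume small: "\<forall>\<epsilon>>0. \<exists>x\<in>M. 0 < x \<and> x < \<epsilon>"
  show "(0::real) islimpt (real_of_rat ` M)"
    unfolding islimpt_approachable
  proof (intro allI impI)
    fix e :: real assume "0 < e"
    then obtain \<epsilon> where "0 < real_of_rat \<epsilon>" "real_of_rat \<epsilon> < e" by (meson of_rat_dense)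
    then have "0 < \<epsilon>" by simp
    with small obtain x where "x \<in> M" "0 < x" "x < \<epsilon>" by blast
    then have "real_of_rat x \<noteq> 0" "dist (real_of_rat x) 0 < e"
      using \<open>real_of_rat \<epsilon> < e\<close> of_rat_less[of x \<epsilon>, where 'a=real]
      by (auto simp: dist_real_def)
    with \<open>x \<in> M\<close> show "\<exists>y\<in>real_of_rat ` M. y \<noteq> 0 \<and> dist y 0 < e" by blast
  qed
qed

lemma least_positive_generates:
  assumes pm: "puiseux_monoid M" and rc: "root_closed M" and g: "least_positive M g"
  shows "M = {of_nat n * g | n::nat. True}"
proof
  have "g \<in> M" using g by (simp add: least_positive_def)
  then show "{of_nat n * g | n::nat. True} \<subseteq> M"
    using puiseux_monoid_of_nat_mult[OF pm] by blast
next
  show "M \<subseteq> {of_nat n * g | n::nat. True}"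
  proof
    fix x assume x: "x \<in> M"
    have "g \<in> M" "0 < g" using g by (auto simp: least_positive_def)
    define q where "q = nat \<lfloor>x / g\<rfloor>"
    have q: "of_nat q = of_int \<lfloor>x / g\<rfloor>"
      using puiseux_monoid_nonneg[OF pm x] \<open>0 < g\<close> by (simp add: q_def)
    have below: "of_nat q * g \<le> x" and above: "x - of_nat q * g < g"
      unfolding q using floor_correct[of "x / g"] \<open>0 < g\<close>
      by (simp_all add: le_divide_eq divide_less_eq algebra_simps)
    have "x - of_nat q * g \<in> M"
      using root_closed_diff_mem[OF pm rc x puiseux_monoid_of_nat_mult[OF pm \<open>g \<in> M\<close>] below] .
    with g above have "\<not> 0 < x - of_nat q * g"
      unfolding least_positive_def by (meson not_le)
    with below have "x - of_nat q * g = 0" by simp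
    then show "x \<in> {of_nat n * g | n::nat. True}" by auto
  qed
qed

lemma least_positive_atom:
  assumes pm: "puiseux_monoid M" and g: "least_positive M g"
  shows "atom M g"
  unfolding atom_def
proof (intro conjI ballI impI)
  show "g \<in> M" "g \<noteq> 0" using g by (auto simp: least_positive_def)
  fix x y assume "x \<in> M" "y \<in> M" "g = x + y"
  show "x = 0 \<or> y = 0"
  proof (rule ccontr)
    assume "\<not> (x = 0 \<or> y = 0)"
    with pm \<open>x \<in> M\<close> \<open>y \<in> M\<close> have "0 < x" "0 < y" by (auto simp: puiseux_monoid_pos_iff)
    with g \<open>y \<in> M\<close> have "g \<le> y" by (simp add: least_positive_def)
    with \<open>g = x + y\<close> \<open>0 < x\<close> show False by simp
  qed
qed

lemma least_positive_atomic:
  assumes pm: "puiseux_monoid M" and rc: "root_closed M" and g: "least_positive M g"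
  shows "atomic M"
  unfolding atomic_def
proof
  fix x assume "x \<in> M"
  then obtain n where "x = of_nat n * g" using least_positive_generates[OF assms] by auto
  then show "\<exists>as. (\<forall>a\<in>set as. atom M a) \<and> sum_list as = x"
    using least_positive_atom[OF pm g]
    by (intro exI[of _ "replicate n g"]) (simp add: sum_list_replicate)
qed

lemma least_positive_not_islimpt:
  assumes "puiseux_monoid M" and "least_positive M g"
  shows "\<not> (0::real) islimpt (real_of_rat ` M)"
  using assms unfolding islimpt_zero_iff_small_elements[OF assms(1)] least_positive_def
  by (meson not_le)

lemma cyclic_least_positive:
  assumes pm: "puiseux_monoid M" and "cyclic M" and "M \<noteq> {0}"
  shows "\<exists>g. least_positive M g"
proof -
  obtain g where M: "M = {of_nat n * g | n::nat. True}" using \<open>cyclic M\<close> by (auto simp: cyclic_def)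
  then have "g \<in> M" by (auto intro: exI[of _ 1])
  have "g \<noteq> 0" using M \<open>M \<noteq> {0}\<close> by auto
  with pm \<open>g \<in> M\<close> have "0 < g" by (simp add: puiseux_monoid_pos_iff)
  have "g \<le> x" if "x \<in> M" "0 < x" for x
  proof -
    obtain n :: nat where x: "x = of_nat n * g" using \<open>x \<in> M\<close> M by auto
    with \<open>0 < x\<close> have "1 \<le> n" by (cases n) auto
    with \<open>0 < g\<close> show ?thesis by (simp add: x)
  qed
  with \<open>g \<in> M\<close> \<open>0 < g\<close> show ?thesis unfolding least_positive_def by blast
qed

lemma no_least_positive_antimatter:
  assumes pm: "puiseux_monoid M" and rc: "root_closed M" and no_min: "\<nexists>g. least_positive M g"
  shows "antimatter M"
  unfolding antimatter_def
proof
  assume "\<exists>a. atom M a"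
  then obtain a where a: "atom M a" ..
  then have "a \<in> M" "0 < a" using pm by (auto simp: atom_def puiseux_monoid_pos_iff)
  with no_min obtain y where y: "y \<in> M" "0 < y" "y < a"
    unfolding least_positive_def by (meson not_le)
  have "a - y \<in> M" using root_closed_diff_mem[OF pm rc \<open>a \<in> M\<close> \<open>y \<in> M\<close>] y by simp
  moreover have "a = y + (a - y)" by simp
  ultimately have "y = 0 \<or> a - y = 0" using a \<open>y \<in> M\<close> unfolding atom_def by blast
  with y show False by simp
qed

lemma no_least_positive_halving:
  assumes pm: "puiseux_monoid M" and rc: "root_closed M" and no_min: "\<nexists>g. least_positive M g"
    and "x \<in> M" "0 < x"
  shows "\<exists>y\<in>M. 0 < y \<and> 2 * y \<le> x"
proof -
  obtain y where y: "y \<in> M" "0 < y" "y < x"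
    using assms(4,5) no_min unfolding least_positive_def by (meson not_le)
  have "x - y \<in> M" using root_closed_diff_mem[OF pm rc \<open>x \<in> M\<close> \<open>y \<in> M\<close>] y by simp
  moreover have "0 < x - y" using y by simp
  moreover have "2 * y \<le> x \<or> 2 * (x - y) \<le> x" by (auto simp: algebra_simps)
  ultimately show ?thesis using y by blast
qed

lemma no_least_positive_small_elements:
  assumes pm: "puiseux_monoid M" and rc: "root_closed M" and no_min: "\<nexists>g. least_positive M g"
    and "M \<noteq> {0}" and "0 < \<epsilon>"
  shows "\<exists>x\<in>M. 0 < x \<and> x < \<epsilon>"
proof -
  obtain p where "p \<in> M" "p \<noteq> 0" using \<open>M \<noteq> {0}\<close> pm by (auto simp: puiseux_monoid_def)
  with pm have "0 < p" by (simp add: puiseux_monoid_pos_iff)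
  have shrink: "\<exists>x\<in>M. 0 < x \<and> 2 ^ k * x \<le> p" for k :: nat
  proof (induction k)
    case 0
    then show ?case using \<open>p \<in> M\<close> \<open>0 < p\<close> by auto
  next
    case (Suc k)
    then obtain x where "x \<in> M" "0 < x" "2 ^ k * x \<le> p" by blast
    then obtain y where "y \<in> M" "0 < y" "2 * y \<le> x"
      using no_least_positive_halving[OF pm rc no_min] by blast
    have "2 ^ Suc k * y = 2 ^ k * (2 * y)" by simp
    also have "\<dots> \<le> 2 ^ k * x" using \<open>2 * y \<le> x\<close> by simp
    also have "\<dots> \<le> p" by fact
    finally have "2 ^ Suc k * y \<le> p" .
    with \<open>y \<in> M\<close> \<open>0 < y\<close> show ?case by blast
  qed
  obtain k :: nat where "p < of_nat k * \<epsilon>" using ex_less_of_nat_mult[OF \<open>0 < \<epsilon>\<close>] ..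
  also have "\<dots> < 2 ^ k * \<epsilon>" using \<open>0 < \<epsilon>\<close> by (simp add: mult_strict_right_mono)
  finally have "p < 2 ^ k * \<epsilon>" .
  obtain x where "x \<in> M" "0 < x" "2 ^ k * x \<le> p" using shrink by blast
  with \<open>p < 2 ^ k * \<epsilon>\<close> have "2 ^ k * x < 2 ^ k * \<epsilon>" by linarith
  then have "x < \<epsilon>" by (simp add: mult_less_cancel_left_pos)
  with \<open>x \<in> M\<close> \<open>0 < x\<close> show ?thesis by blast
qed

lemma antimatter_not_atomic:
  assumes "antimatter M" and "M \<noteq> {0}" and "0 \<in> M"
  shows "\<not> atomic M"
proof
  assume "atomic M"
  obtain p where "p \<in> M" "p \<noteq> 0" using assms(2,3) by blast
  with \<open>atomic M\<close> obtain as where "\<forall>a\<in>set as. atom M a" "sum_list as = p"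
    by (auto simp: atomic_def)
  with \<open>antimatter M\<close> have "as = []" by (cases as) (auto simp: antimatter_def)
  with \<open>sum_list as = p\<close> \<open>p \<noteq> 0\<close> show False by simp
qed

theorem mainTheorem10:
  fixes M :: "rat set"
  assumes "puiseux_monoid M" and "root_closed M" and "M \<noteq> {0}"
  shows "(atomic M \<longleftrightarrow> cyclic M)
       \<and> (antimatter M \<longleftrightarrow> (0::real) islimpt (real_of_rat ` M))
       \<and> (atomic M \<or> antimatter M)"
proof (cases "\<exists>g. least_positive M g")
  case True
  then obtain g where g: "least_positive M g" ..
  have "cyclic M" using least_positive_generates[OF assms(1,2) g] by (auto simp: cyclic_def)
  moreover have "atomic M" using least_positive_atomic[OF assms(1,2) g] .
  moreover have "\<not> antimatter M" using least_positive_atom[OF assms(1) g] by (auto simp: antimatter_def)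
  moreover have "\<not> (0::real) islimpt (real_of_rat ` M)" using least_positive_not_islimpt[OF assms(1) g] .
  ultimately show ?thesis by blast
next
  case False
  have "antimatter M" using no_least_positive_antimatter[OF assms(1,2) False] .
  moreover have "(0::real) islimpt (real_of_rat ` M)"
    using no_least_positive_small_elements[OF assms(1,2) False assms(3)]
    by (simp add: islimpt_zero_iff_small_elements[OF assms(1)])
  moreover have "\<not> cyclic M" using cyclic_least_positive[OF assms(1) _ assms(3)] False by blast
  moreover have "\<not> atomic M"
    using antimatter_not_atomic[OF \<open>antimatter M\<close> assms(3)] assms(1)
    by (simp add: puiseux_monoid_def)
  ultimately show ?thesis by blast
qed

end
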